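(* Assume $U_1>2U_2$, $0<\varepsilon\ll U_2$ and $U_2/\varepsilon\notin\mathbb N$, and $L$ large enough. Then $\Phi(\underline 0,\underline 1)\le\Gamma$.
   Context: Let $L\in\mathbb N$, $\Lambda=\{0,\dots,L\}^2$, $\partial^-\Lambda=\{x\in\Lambda:\exists y\notin\Lambda,\ |y-x|=1\}$, $\Lambda_0=\Lambda\setminus\partial^-\Lambda$, configurations $\eta\in\{0,1\}^\Lambda$ with energy $H(\eta)=-U_1\sum_{(x,y)\in\Lambda^*_{0,h}}\eta(x)\eta(y)-U_2\sum_{(x,y)\in\Lambda^*_{0,v}}\eta(x)\eta(y)+\Delta\sum_{x\in\Lambda}\eta(x)$, where $\Lambda^*_{0,h}$ ($\Lambda^*_{0,v}$) are the horizontal (vertical) unoriented nearest-neighbour bonds inside $\Lambda_0$, and $U_1,U_2,\Delta>0$. $\varepsilon=U_1+U_2-\Delta$, $\ell_2^*=\lceil U_2/\varepsilon\rceil$, $\Gamma=U_1\ell_2^*+2U_2\ell_2^*+U_1-U_2-2\varepsilon(\ell_2^* )^2+3\varepsilon\ell_2^*-2\varepsilon$. $\underline 0$ is the empty configuration, $\underline 1$ the configuration equal to $1$ on $\Lambda_0$ and $0$ on $\Lambda\setminus\Lambda_0$. Allowed transitions (Kawasaki dynamics with open boundary): $\eta\to\eta'$ is possible iff $\eta'\neq\eta$ and $\eta'$ is obtained from $\eta$ either by exchanging the values at two nearest-neighbour sites of $\Lambda$, or by setting $\eta(x)=0$ for some $x\in\partial^-\Lambda$, or by setting $\eta(y)=1$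 for some $y\in\partial^-\Lambda$. A path is a sequence of configurations with consecutive ones related by allowed transitions, and $\Phi(\eta,\eta')=\min_{\omega:\eta\to\eta'}\max_{\zeta\in\omega}H(\zeta)$. *)

theory Defs
  imports Complex_Main
begin

type_synonym site = "int \<times> int"
type_synonym config = "site \<Rightarrow> nat"

definition lam :: "nat \<Rightarrow> site set" where
  "lam L = {0..int L} \<times> {0..int L}"

definition adj :: "site \<Rightarrow> site \<Rightarrow> bool" where
  "adj x y \<longleftrightarrow> \<bar>fst x - fst y\<bar> + \<bar>snd x - snd y\<bar> = 1"

definition bdry :: "nat \<Rightarrow> site set" where
  "bdry L = {x \<in> lam L. \<exists>y. adj x y \<and> y \<notin> lam L}"

definition lam0 :: "nat \<Rightarrow> site set" where
  "lam0 L = lam L - bdry L"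

definition hbonds :: "nat \<Rightarrow> (site \<times> site) set" where
  "hbonds L = {(x, y). x \<in> lam0 L \<and> y \<in> lam0 L \<and> snd y = snd x \<and> fst y = fst x + 1}"

definition vbonds :: "nat \<Rightarrow> (site \<times> site) set" where
  "vbonds L = {(x, y). x \<in> lam0 L \<and> y \<in> lam0 L \<and> fst y = fst x \<and> snd y = snd x + 1}"

definition configs :: "nat \<Rightarrow> config set" where
  "configs L = {\<eta>. (\<forall>x\<in>lam L. \<eta> x \<in> {0, 1}) \<and> (\<forall>x. x \<notin> lam L \<longrightarrow> \<eta> x = 0)}"

definition H :: "real \<Rightarrow> real \<Rightarrow> real \<Rightarrow> nat \<Rightarrow> config \<Rightarrow> real" where
  "H U1 U2 \<Delta> L \<eta> =
     - U1 * (\<Sum>(x, y)\<in>hbonds L. real (\<eta> x * \<eta> y))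
     - U2 * (\<Sum>(x, y)\<in>vbonds L. real (\<eta> x * \<eta> y))
     + \<Delta> * (\<Sum>x\<in>lam L. real (\<eta> x))"

definition step :: "nat \<Rightarrow> config \<Rightarrow> config \<Rightarrow> bool" where
  "step L \<eta> \<eta>' \<longleftrightarrow> \<eta>' \<noteq> \<eta> \<and>
     ((\<exists>x y. x \<in> lam L \<and> y \<in> lam L \<and> adj x y \<and> \<eta>' = \<eta>(x := \<eta> y, y := \<eta> x))
      \<or> (\<exists>x\<in>bdry L. \<eta>' = \<eta>(x := 0))
      \<or> (\<exists>y\<in>bdry L. \<eta>' = \<eta>(y := 1)))"

definition is_path :: "nat \<Rightarrow> config \<Rightarrow> config \<Rightarrow> config list \<Rightarrow> bool" where
  "is_path L \<eta> \<eta>' p \<longleftrightarrow> p \<noteq> [] \<and> hd p = \<eta> \<and> last p = \<eta>' \<and> set p \<subseteq> configs L \<and>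
     (\<forall>i. Suc i < length p \<longrightarrow> step L (p ! i) (p ! Suc i))"

definition Phi :: "real \<Rightarrow> real \<Rightarrow> real \<Rightarrow> nat \<Rightarrow> config \<Rightarrow> config \<Rightarrow> real" where
  "Phi U1 U2 \<Delta> L \<eta> \<eta>' = (INF p \<in> {p. is_path L \<eta> \<eta>' p}. Max (H U1 U2 \<Delta> L ` set p))"

definition zero_conf :: config where
  "zero_conf = (\<lambda>_. 0)"

definition one_conf :: "nat \<Rightarrow> config" where
  "one_conf L = (\<lambda>x. if x \<in> lam0 L then 1 else 0)"

definition eps :: "real \<Rightarrow> real \<Rightarrow> real \<Rightarrow> real" where
  "eps U1 U2 \<Delta> = U1 + U2 - \<Delta>"

definition ell2 :: "real \<Rightarrow> real \<Rightarrow> real \<Rightarrow> real" where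
  "ell2 U1 U2 \<Delta> = of_int \<lceil>U2 / eps U1 U2 \<Delta>\<rceil>"

definition Gamma :: "real \<Rightarrow> real \<Rightarrow> real \<Rightarrow> real" where
  "Gamma U1 U2 \<Delta> = (let e = eps U1 U2 \<Delta>; l = ell2 U1 U2 \<Delta> in
     U1 * l + 2 * U2 * l + U1 - U2 - 2 * e * l\<^sup>2 + 3 * e * l - 2 * e)"

end

theory Submission
  imports Defs
begin

text \<open>
  The bound is witnessed by an explicit path through configurations \<open>1\<^sub>S\<close> of occupied sets \<open>S\<close>.
  Each particle enters at the boundary, at cost \<open>\<Delta>\<close>, and walks through empty sites to its place.
  Below the critical height \<open>\<ell> = \<lceil>U\<^sub>2 / \<epsilon>\<rceil>\<close> a rectangle of height \<open>b\<close> is widened column by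
  column to width \<open>2b + 1\<close>; then a protuberance is put on top, the particles of the last column are
  carried one by one onto the new row (each slide breaks a single bond for a moment), and the row is
  filled from the boundary, giving a \<open>2b \<times> (b + 1)\<close> rectangle. At height \<open>\<ell>\<close> a new column lowers
  the energy since \<open>\<epsilon> \<ell> > U\<^sub>2\<close>, so the droplet is stretched to width \<open>L - 1\<close>; once \<open>\<epsilon> (L - 1) > U\<^sub>1\<close>
  new rows lower it too, until \<open>\<Lambda>\<^sub>0\<close> is full. The energies of all shapes are tracked exactly, and
  every local maximum is at most \<open>\<Gamma>\<close> as soon as \<open>\<epsilon> < U\<^sub>2\<close> and \<open>\<epsilon> < U\<^sub>1 - 2 U\<^sub>2\<close>.
\<close>

section \<open>Shapes in the lattice\<close>

lemma mem_lam0: "(x, y) \<in> lam0 L \<longleftrightarrow> 1 \<le> x \<and> x \<le> int L - 1 \<and> 1 \<le> y \<and> y \<le> int L - 1"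
proof
  assume "(x, y) \<in> lam0 L"
  then have "(x, y) \<in> lam L" and nbrs: "\<And>q. adj (x, y) q \<Longrightarrow> q \<in> lam L"
    unfolding lam0_def bdry_def by auto
  moreover have "(x - 1, y) \<in> lam L" "(x + 1, y) \<in> lam L" "(x, y - 1) \<in> lam L" "(x, y + 1) \<in> lam L"
    by (auto intro: nbrs simp: adj_def)
  ultimately show "1 \<le> x \<and> x \<le> int L - 1 \<and> 1 \<le> y \<and> y \<le> int L - 1"
    by (auto simp: lam_def)
next
  assume "1 \<le> x \<and> x \<le> int L - 1 \<and> 1 \<le> y \<and> y \<le> int L - 1"
  then show "(x, y) \<in> lam0 L"
    unfolding lam0_def bdry_def lam_def adj_def by (auto simp: abs_if split: if_splits)
qed

lemma lam0_subset_lam: "lam0 L \<subseteq> lam L"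
  unfolding lam0_def by auto

lemma finite_lam: "finite (lam L)"
  unfolding lam_def by auto

lemma top_in_bdry: "0 \<le> x \<Longrightarrow> x \<le> int L \<Longrightarrow> (x, int L) \<in> bdry L"
  unfolding bdry_def lam_def by (rule CollectI, intro conjI exI[of _ "(x, int L + 1)"]) (auto simp: adj_def)

lemma right_in_bdry: "0 \<le> y \<Longrightarrow> y \<le> int L \<Longrightarrow> (int L, y) \<in> bdry L"
  unfolding bdry_def lam_def by (rule CollectI, intro conjI exI[of _ "(int L + 1, y)"]) (auto simp: adj_def)

definition rect :: "int \<Rightarrow> int \<Rightarrow> site set" where
  "rect a b = {p. 1 \<le> fst p \<and> fst p \<le> a \<and> 1 \<le> snd p \<and> snd p \<le> b}"

definition hseg :: "int \<Rightarrow> int \<Rightarrow> int \<Rightarrow> site set" where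
  "hseg c d y = {p. c \<le> fst p \<and> fst p \<le> d \<and> snd p = y}"

definition vseg :: "int \<Rightarrow> int \<Rightarrow> int \<Rightarrow> site set" where
  "vseg x c d = {p. fst p = x \<and> c \<le> snd p \<and> snd p \<le> d}"

lemma mem_rect [simp]: "(x, y) \<in> rect a b \<longleftrightarrow> 1 \<le> x \<and> x \<le> a \<and> 1 \<le> y \<and> y \<le> b"
  by (simp add: rect_def)

lemma mem_hseg [simp]: "(x, y) \<in> hseg c d y' \<longleftrightarrow> c \<le> x \<and> x \<le> d \<and> y = y'"
  by (simp add: hseg_def)

lemma mem_vseg [simp]: "(x, y) \<in> vseg x' c d \<longleftrightarrow> x = x' \<and> c \<le> y \<and> y \<le> d"
  by (simp add: vseg_def)

lemma subset_lam0I: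
  "(\<And>x y. (x, y) \<in> S \<Longrightarrow> 1 \<le> x \<and> x \<le> int L - 1 \<and> 1 \<le> y \<and> y \<le> int L - 1) \<Longrightarrow> S \<subseteq> lam0 L"
  by (auto simp: mem_lam0)

lemma rect_subset_lam0: "a \<le> int L - 1 \<Longrightarrow> b \<le> int L - 1 \<Longrightarrow> rect a b \<subseteq> lam0 L"
  by (intro subset_lam0I) auto

lemma rect_eq_lam0: "rect (int L - 1) (int L - 1) = lam0 L"
  by (auto simp: mem_lam0)

lemma rect_subset_lam: "a \<le> int L - 1 \<Longrightarrow> b \<le> int L - 1 \<Longrightarrow> rect a b \<subseteq> lam L"
  using rect_subset_lam0 lam0_subset_lam by blast

text \<open>Shapes met while the rightmost column \<open>x = a\<close> of an \<open>a \<times> b\<close> rectangle is carried, particle by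
  particle, onto the row \<open>y = b + 1\<close> above it: in \<open>column_hole a b i h\<close> the particles of the column slide
  up into the hole at height \<open>h\<close>; in \<open>row_hole a b i g\<close> the particles of the new row slide left into
  the hole at \<open>g\<close>.\<close>

definition column_hole :: "int \<Rightarrow> int \<Rightarrow> int \<Rightarrow> int \<Rightarrow> site set" where
  "column_hole a b i h = rect (a - 1) b \<union> hseg (a - i) (a - 1) (b + 1) \<union> (vseg a i (b + 1) - {(a, h)})"

definition row_hole :: "int \<Rightarrow> int \<Rightarrow> int \<Rightarrow> int \<Rightarrow> site set" where
  "row_hole a b i g = rect (a - 1) b \<union> vseg a (i + 1) b \<union> (hseg (a - i - 1) a (b + 1) - {(g, b + 1)})"

lemma mem_column_hole:
  "(x, y) \<in> column_hole a b i h \<longleftrightarrow> (1 \<le> x \<and> x \<le> a - 1 \<and> 1 \<le> y \<and> y \<le> b)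
     \<or> (a - i \<le> x \<and> x \<le> a - 1 \<and> y = b + 1) \<or> (x = a \<and> i \<le> y \<and> y \<le> b + 1 \<and> y \<noteq> h)"
  unfolding column_hole_def by auto

lemma mem_row_hole:
  "(x, y) \<in> row_hole a b i g \<longleftrightarrow> (1 \<le> x \<and> x \<le> a - 1 \<and> 1 \<le> y \<and> y \<le> b)
     \<or> (x = a \<and> i + 1 \<le> y \<and> y \<le> b) \<or> (a - i - 1 \<le> x \<and> x \<le> a \<and> y = b + 1 \<and> x \<noteq> g)"
  unfolding row_hole_def by auto

lemma column_hole_bottom: "1 \<le> i \<Longrightarrow> i \<le> b \<Longrightarrow> column_hole a b i i = row_hole a b i (a - i - 1)"
  by (auto simp: column_hole_def row_hole_def)

lemma row_hole_right: "row_hole a b i a = column_hole a b (i + 1) (b + 1)"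
  by (auto simp: column_hole_def row_hole_def)

section \<open>Energy of occupied sets\<close>

definition conf_of :: "site set \<Rightarrow> config" where
  "conf_of S = (\<lambda>p. if p \<in> S then 1 else 0)"

definition hbonds_in :: "nat \<Rightarrow> site set \<Rightarrow> (site \<times> site) set" where
  "hbonds_in L S = {q \<in> hbonds L. fst q \<in> S \<and> snd q \<in> S}"

definition vbonds_in :: "nat \<Rightarrow> site set \<Rightarrow> (site \<times> site) set" where
  "vbonds_in L S = {q \<in> vbonds L. fst q \<in> S \<and> snd q \<in> S}"

definition hnbrs :: "site set \<Rightarrow> site \<Rightarrow> real" where
  "hnbrs S = (\<lambda>(x, y). of_bool ((x - 1, y) \<in> S) + of_bool ((x + 1, y) \<in> S))"

definition vnbrs :: "site set \<Rightarrow> site \<Rightarrow> real" where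
  "vnbrs S = (\<lambda>(x, y). of_bool ((x, y - 1) \<in> S) + of_bool ((x, y + 1) \<in> S))"

lemma finite_hbonds: "finite (hbonds L)"
  by (rule finite_subset[of _ "lam L \<times> lam L"])
    (use lam0_subset_lam finite_lam in \<open>auto simp: hbonds_def\<close>)

lemma finite_vbonds: "finite (vbonds L)"
  by (rule finite_subset[of _ "lam L \<times> lam L"])
    (use lam0_subset_lam finite_lam in \<open>auto simp: vbonds_def\<close>)

lemma sum_conf_of_bonds:
  assumes "finite A"
  shows "(\<Sum>(x, y)\<in>A. real (conf_of S x * conf_of S y)) = card {q \<in> A. fst q \<in> S \<and> snd q \<in> S}"
proof -
  have "(\<Sum>(x, y)\<in>A. real (conf_of S x * conf_of S y)) = (\<Sum>q\<in>A. if fst q \<in> S \<and> snd q \<in> S then 1 else 0)"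
    by (rule sum.cong) (auto simp: conf_of_def)
  also have "\<dots> = card {q \<in> A. fst q \<in> S \<and> snd q \<in> S}"
    using assms by (simp add: sum.If_cases Int_def)
  finally show ?thesis .
qed

lemma H_conf_of:
  assumes "S \<subseteq> lam L"
  shows "H U1 U2 D L (conf_of S) = D * card S - U1 * card (hbonds_in L S) - U2 * card (vbonds_in L S)"
proof -
  have "(\<Sum>x\<in>lam L. real (conf_of S x)) = card (lam L \<inter> S)"
    using finite_lam by (simp add: conf_of_def of_nat_sum[symmetric] sum.If_cases)
  also have "lam L \<inter> S = S"
    using assms by auto
  finally show ?thesis
    unfolding H_def hbonds_in_def vbonds_in_def
    using sum_conf_of_bonds[OF finite_hbonds] sum_conf_of_bonds[OF finite_vbonds] by simp
qed

lemma H_empty: "H U1 U2 D L (conf_of {}) = 0"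
  by (simp add: H_conf_of hbonds_in_def vbonds_in_def)

lemma card_hbonds_in_mono: "S \<subseteq> T \<Longrightarrow> card (hbonds_in L S) \<le> card (hbonds_in L T)"
  unfolding hbonds_in_def by (rule card_mono) (auto intro: finite_subset[OF _ finite_hbonds])

lemma card_vbonds_in_mono: "S \<subseteq> T \<Longrightarrow> card (vbonds_in L S) \<le> card (vbonds_in L T)"
  unfolding vbonds_in_def by (rule card_mono) (auto intro: finite_subset[OF _ finite_vbonds])

lemma H_conf_of_insert_le:
  assumes "S \<subseteq> lam L" "z \<in> lam L" "z \<notin> S" "0 \<le> U1" "0 \<le> U2"
  shows "H U1 U2 D L (conf_of (insert z S)) \<le> H U1 U2 D L (conf_of S) + D"
proof -
  have "card (insert z S) = card S + 1"
    using assms(1,3) finite_lam finite_subset by fastforce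
  moreover have "U1 * card (hbonds_in L S) \<le> U1 * card (hbonds_in L (insert z S))"
    using assms(4) card_hbonds_in_mono[OF subset_insertI] by (simp add: mult_left_mono)
  moreover have "U2 * card (vbonds_in L S) \<le> U2 * card (vbonds_in L (insert z S))"
    using assms(5) card_vbonds_in_mono[OF subset_insertI] by (simp add: mult_left_mono)
  ultimately show ?thesis
    using assms(1,2) by (simp add: H_conf_of algebra_simps)
qed

lemma card_hbonds_in_insert:
  assumes "S \<subseteq> lam0 L" "(x, y) \<in> lam0 L" "(x, y) \<notin> S"
  shows "real (card (hbonds_in L (insert (x, y) S))) = card (hbonds_in L S) + hnbrs S (x, y)"
proof -
  define right where "right = (if (x + 1, y) \<in> S then {((x, y), (x + 1, y))} else {})"
  define left where "left = (if (x - 1, y) \<in> S then {((x - 1, y), (x, y))} else {})"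
  have split: "hbonds_in L (insert (x, y) S) = hbonds_in L S \<union> (right \<union> left)"
    using assms unfolding hbonds_in_def hbonds_def right_def left_def by (auto split: if_splits)
  have "finite (hbonds_in L S)"
    unfolding hbonds_in_def using finite_hbonds by auto
  moreover have "hbonds_in L S \<inter> (right \<union> left) = {}" "right \<inter> left = {}"
    using assms(3) unfolding hbonds_in_def right_def left_def by auto
  ultimately have "card (hbonds_in L S \<union> (right \<union> left)) = card (hbonds_in L S) + card right + card left"
    by (simp add: card_Un_disjoint right_def left_def)
  moreover have "card right = of_bool ((x + 1, y) \<in> S)" "card left = of_bool ((x - 1, y) \<in> S)"
    unfolding right_def left_def by simp_all
  ultimately show ?thesis
    unfolding split hnbrs_def by simp
qed

lemma card_vbonds_in_insert:
  assumes "S \<subseteq> lam0 L" "(x, y) \<in> lam0 L" "(x, y) \<notin> S"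
  shows "real (card (vbonds_in L (insert (x, y) S))) = card (vbonds_in L S) + vnbrs S (x, y)"
proof -
  define up where "up = (if (x, y + 1) \<in> S then {((x, y), (x, y + 1))} else {})"
  define down where "down = (if (x, y - 1) \<in> S then {((x, y - 1), (x, y))} else {})"
  have split: "vbonds_in L (insert (x, y) S) = vbonds_in L S \<union> (up \<union> down)"
    using assms unfolding vbonds_in_def vbonds_def up_def down_def by (auto split: if_splits)
  have "finite (vbonds_in L S)"
    unfolding vbonds_in_def using finite_vbonds by auto
  moreover have "vbonds_in L S \<inter> (up \<union> down) = {}" "up \<inter> down = {}"
    using assms(3) unfolding vbonds_in_def up_def down_def by auto
  ultimately have "card (vbonds_in L S \<union> (up \<union> down)) = card (vbonds_in L S) + card up + card down"
    by (simp add: card_Un_disjoint up_def down_def)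
  moreover have "card up = of_bool ((x, y + 1) \<in> S)" "card down = of_bool ((x, y - 1) \<in> S)"
    unfolding up_def down_def by simp_all
  ultimately show ?thesis
    unfolding split vnbrs_def by simp
qed

lemma H_conf_of_insert:
  assumes "S \<subseteq> lam0 L" "z \<in> lam0 L" "z \<notin> S"
  shows "H U1 U2 D L (conf_of (insert z S))
    = H U1 U2 D L (conf_of S) + D - U1 * hnbrs S z - U2 * vnbrs S z"
proof -
  obtain x y where z: "z = (x, y)" by fastforce
  have S: "S \<subseteq> lam L" "insert z S \<subseteq> lam L"
    using assms lam0_subset_lam by auto
  moreover have "card (insert z S) = card S + 1"
    using assms(3) finite_subset[OF S(1) finite_lam] by simp
  ultimately show ?thesis
    using card_hbonds_in_insert[OF assms[unfolded z]] card_vbonds_in_insert[OF assms[unfolded z]]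
    by (simp add: H_conf_of z algebra_simps)
qed

lemma H_conf_of_move:
  assumes "S \<subseteq> lam0 L" "z \<in> S" "w \<in> lam0 L" "w \<notin> S"
  shows "H U1 U2 D L (conf_of (insert w (S - {z}))) = H U1 U2 D L (conf_of S)
    + U1 * hnbrs (S - {z}) z + U2 * vnbrs (S - {z}) z - U1 * hnbrs (S - {z}) w - U2 * vnbrs (S - {z}) w"
proof -
  have rest: "S - {z} \<subseteq> lam0 L" "z \<in> lam0 L" "z \<notin> S - {z}" "w \<notin> S - {z}"
    using assms by auto
  have "H U1 U2 D L (conf_of S) = H U1 U2 D L (conf_of (S - {z})) + D
      - U1 * hnbrs (S - {z}) z - U2 * vnbrs (S - {z}) z"
    using H_conf_of_insert[OF rest(1-3)] insert_Diff[OF assms(2)] by simp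
  moreover have "H U1 U2 D L (conf_of (insert w (S - {z}))) = H U1 U2 D L (conf_of (S - {z})) + D
      - U1 * hnbrs (S - {z}) w - U2 * vnbrs (S - {z}) w"
    using H_conf_of_insert[OF rest(1) assms(3) rest(4)] .
  ultimately show ?thesis
    by simp
qed

section \<open>Paths below an energy level\<close>

lemma is_path_iff:
  "is_path L a b p \<longleftrightarrow>
     p \<noteq> [] \<and> hd p = a \<and> last p = b \<and> set p \<subseteq> configs L \<and> successively (step L) p"
  unfolding is_path_def successively_conv_nth ..

lemma is_path_append:
  assumes "is_path L a b p" "is_path L b c q"
  shows "is_path L a c (p @ tl q)"
proof (cases "tl q")
  case Nil
  then have "q = [b]" "b = c"
    using assms(2) unfolding is_path_iff by (metis last.simps list.collapse)+
  then show ?thesis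
    using assms(1) by simp
next
  case (Cons r rs)
  then have "q = b # r # rs"
    using assms(2) unfolding is_path_iff by (metis list.collapse)
  then show ?thesis
    using assms unfolding is_path_iff by (auto simp: successively_append_iff)
qed

lemma step_conf_of_insert:
  assumes "y \<in> bdry L" "y \<notin> S"
  shows "step L (conf_of S) (conf_of (insert y S))"
proof -
  have "conf_of (insert y S) = (conf_of S)(y := 1)"
    unfolding conf_of_def by auto
  moreover have "conf_of (insert y S) \<noteq> conf_of S"
    using assms(2) unfolding conf_of_def by (metis insertI1 zero_neq_one)
  ultimately
  show ?thesis
    unfolding step_def using assms(1) by metis
qed

lemma step_conf_of_move:
  assumes "z \<in> S" "w \<notin> S" "z \<in> lam L" "w \<in> lam L" "adj z w"
  shows "step L (conf_of S) (conf_of (insert w (S - {z})))"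
proof -
  have "conf_of (insert w (S - {z})) = (conf_of S)(z := conf_of S w, w := conf_of S z)"
    using assms(1,2) unfolding conf_of_def by auto
  moreover have "conf_of (insert w (S - {z})) \<noteq> conf_of S"
    using assms(2) unfolding conf_of_def by (metis insertI1 zero_neq_one)
  ultimately show ?thesis
    unfolding step_def using assms(3-5) by blast
qed

lemma conf_of_in_configs_iff: "conf_of S \<in> configs L \<longleftrightarrow> S \<subseteq> lam L"
  unfolding configs_def conf_of_def by (auto split: if_splits)

locale kawasaki_growth =
  fixes U1 U2 D :: real and L :: nat
  assumes U1_nonneg: "0 \<le> U1" and U2_nonneg: "0 \<le> U2" and D_nonneg: "0 \<le> D"
    and D_le: "D \<le> U1 + U2"
begin

abbreviation En :: "site set \<Rightarrow> real" where
  "En S \<equiv> H U1 U2 D L (conf_of S)"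

abbreviation \<epsilon> :: real where
  "\<epsilon> \<equiv> U1 + U2 - D"

definition reachable_below :: "real \<Rightarrow> site set \<Rightarrow> site set \<Rightarrow> bool" where
  "reachable_below M S T \<longleftrightarrow>
     (\<exists>p. is_path L (conf_of S) (conf_of T) p \<and> (\<forall>c\<in>set p. H U1 U2 D L c \<le> M))"

lemma reachable_below_refl: "S \<subseteq> lam L \<Longrightarrow> En S \<le> M \<Longrightarrow> reachable_below M S S"
  unfolding reachable_below_def is_path_iff
  by (intro exI[of _ "[conf_of S]"]) (simp add: conf_of_in_configs_iff)

lemma reachable_below_trans:
  assumes "reachable_below M S T" "reachable_below M T V"
  shows "reachable_below M S V"
proof -
  obtain p q where p: "is_path L (conf_of S) (conf_of T) p" "\<forall>c\<in>set p. H U1 U2 D L c \<le> M"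
    and q: "is_path L (conf_of T) (conf_of V) q" "\<forall>c\<in>set q. H U1 U2 D L c \<le> M"
    using assms unfolding reachable_below_def by blast
  have "set (tl q) \<subseteq> set q"
    by (cases q) auto
  then show ?thesis
    unfolding reachable_below_def using is_path_append[OF p(1) q(1)] p(2) q(2)
    by (intro exI[of _ "p @ tl q"]) auto
qed

lemma reachable_below_target:
  assumes "reachable_below M S T"
  shows "T \<subseteq> lam L" and "En T \<le> M"
proof -
  obtain p where p: "is_path L (conf_of S) (conf_of T) p" "\<forall>c\<in>set p. H U1 U2 D L c \<le> M"
    using assms unfolding reachable_below_def by blast
  then have "conf_of T \<in> set p"
    unfolding is_path_iff using last_in_set by metis
  then show "T \<subseteq> lam L" and "En T \<le> M"
    using p unfolding is_path_iff conf_of_in_configs_iff[symmetric] by auto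
qed

lemma reachable_below_step:
  assumes "reachable_below M S T" "step L (conf_of T) (conf_of T')" "T' \<subseteq> lam L" "En T' \<le> M"
  shows "reachable_below M S T'"
proof -
  have "is_path L (conf_of T) (conf_of T') [conf_of T, conf_of T']"
    using assms(2,3) reachable_below_target(1)[OF assms(1)]
    by (simp add: is_path_iff conf_of_in_configs_iff)
  then have "reachable_below M T T'"
    unfolding reachable_below_def using assms(4) reachable_below_target(2)[OF assms(1)] by auto
  then show ?thesis
    using assms(1) reachable_below_trans by blast
qed

lemma reachable_below_move:
  assumes "reachable_below M S T" "z \<in> T" "w \<notin> T" "w \<in> lam L" "adj z w"
    and "En (insert w (T - {z})) \<le> M"
  shows "reachable_below M S (insert w (T - {z}))"
proof (rule reachable_below_step[OF assms(1) _ _ assms(6)])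
  have T: "T \<subseteq> lam L"
    using reachable_below_target(1)[OF assms(1)] .
  show "step L (conf_of T) (conf_of (insert w (T - {z})))"
    using step_conf_of_move[OF assms(2,3) _ assms(4,5)] T assms(2) by blast
  show "insert w (T - {z}) \<subseteq> lam L"
    using T assms(4) by blast
qed

lemma reachable_below_create:
  assumes "reachable_below M S T" "y \<in> bdry L" "y \<notin> T" "En (insert y T) \<le> M"
  shows "reachable_below M S (insert y T)"
proof (rule reachable_below_step[OF assms(1) step_conf_of_insert[OF assms(2,3)] _ assms(4)])
  show "insert y T \<subseteq> lam L"
    using reachable_below_target(1)[OF assms(1)] assms(2) by (auto simp: bdry_def)
qed

lemma reachable_below_insert_walk:
  assumes S: "S \<subseteq> lam L" and M: "En S + D \<le> M" and start: "p 0 \<in> bdry L"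
    and walk: "\<forall>i<n. adj (p i) (p (Suc i))" "\<forall>i\<le>n. p i \<in> lam L \<and> p i \<notin> S"
  shows "reachable_below M S (insert (p n) S)"
  using walk
proof (induction n)
  case 0
  have "En (insert (p 0) S) \<le> M"
    using H_conf_of_insert_le[OF S _ _ U1_nonneg U2_nonneg, of "p 0" D] 0 M by simp
  moreover have "reachable_below M S S"
    using reachable_below_refl[OF S] D_nonneg M by simp
  ultimately show ?case
    using reachable_below_create[OF _ start] 0 by simp
next
  case (Suc n)
  have prev: "reachable_below M S (insert (p n) S)"
    using Suc by simp
  have free: "p n \<notin> S" "p (Suc n) \<notin> S" "p (Suc n) \<in> lam L" "adj (p n) (p (Suc n))"
    using Suc.prems by auto
  then have "p (Suc n) \<noteq> p n"
    by (auto simp: adj_def)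
  moreover have "insert (p (Suc n)) (insert (p n) S - {p n}) = insert (p (Suc n)) S"
    using free by auto
  moreover have "En (insert (p (Suc n)) S) \<le> M"
    using H_conf_of_insert_le[OF S free(3,2) U1_nonneg U2_nonneg, of D] M by simp
  ultimately show ?case
    using reachable_below_move[OF prev, of "p n" "p (Suc n)"] free by simp
qed

lemma reachable_below_insert_from_top:
  assumes "S \<subseteq> lam L" "En S + D \<le> M" "0 \<le> x" "x \<le> int L" "0 \<le> y" "y \<le> int L"
    and "\<forall>y'. y \<le> y' \<and> y' \<le> int L \<longrightarrow> (x, y') \<notin> S"
  shows "reachable_below M S (insert (x, y) S)"
proof -
  let ?p = "\<lambda>i::nat. (x, int L - int i)" and ?n = "nat (int L - y)"
  have "?p 0 \<in> bdry L"
    using assms(3,4) top_in_bdry by simp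
  moreover have "\<forall>i<?n. adj (?p i) (?p (Suc i))"
    by (simp add: adj_def)
  moreover have "\<forall>i\<le>?n. ?p i \<in> lam L \<and> ?p i \<notin> S"
    using assms(3-7) by (auto simp: lam_def)
  moreover have "?p ?n = (x, y)"
    using assms(5,6) by simp
  ultimately show ?thesis
    using reachable_below_insert_walk[OF assms(1,2), of ?p ?n] by simp
qed

lemma reachable_below_insert_from_right:
  assumes "S \<subseteq> lam L" "En S + D \<le> M" "0 \<le> x" "x \<le> int L" "0 \<le> y" "y \<le> int L"
    and "\<forall>x'. x \<le> x' \<and> x' \<le> int L \<longrightarrow> (x', y) \<notin> S"
  shows "reachable_below M S (insert (x, y) S)"
proof -
  let ?p = "\<lambda>i::nat. (int L - int i, y)" and ?n = "nat (int L - x)"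
  have "?p 0 \<in> bdry L"
    using assms(5,6) right_in_bdry by simp
  moreover have "\<forall>i<?n. adj (?p i) (?p (Suc i))"
    by (simp add: adj_def)
  moreover have "\<forall>i\<le>?n. ?p i \<in> lam L \<and> ?p i \<notin> S"
    using assms(3-7) by (auto simp: lam_def)
  moreover have "?p ?n = (x, y)"
    using assms(3,4) by simp
  ultimately show ?thesis
    using reachable_below_insert_walk[OF assms(1,2), of ?p ?n] by simp
qed

section \<open>Growing rectangles\<close>

text \<open>\<open>rect_energy a b = \<Delta> a b - U1 (a - 1) b - U2 a (b - 1)\<close> is the energy of \<open>rect a b\<close>.\<close>

definition rect_energy :: "int \<Rightarrow> int \<Rightarrow> real" where
  "rect_energy a b = - \<epsilon> * a * b + U1 * b + U2 * a"

lemma rect_energy_diff_width: "rect_energy y b - rect_energy x b = (y - x) * (U2 - \<epsilon> * b)"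
  unfolding rect_energy_def by (simp add: algebra_simps)

lemma rect_energy_diff_height: "rect_energy a y - rect_energy a x = (y - x) * (U1 - \<epsilon> * a)"
  unfolding rect_energy_def by (simp add: algebra_simps)

lemma rect_energy_mono_width:
  assumes "x \<le> y" "\<epsilon> * b \<le> U2"
  shows "rect_energy x b \<le> rect_energy y b"
proof -
  have "0 \<le> (real_of_int y - real_of_int x) * (U2 - \<epsilon> * b)"
    using assms by (intro mult_nonneg_nonneg) auto
  then show ?thesis
    using rect_energy_diff_width[of y b x] by simp
qed

lemma rect_energy_antimono_width:
  assumes "x \<le> y" "U2 \<le> \<epsilon> * b"
  shows "rect_energy y b \<le> rect_energy x b"
proof -
  have "(real_of_int y - real_of_int x) * (U2 - \<epsilon> * b) \<le> 0"
    using assms by (intro mult_nonneg_nonpos) auto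
  then show ?thesis
    using rect_energy_diff_width[of y b x] by simp
qed

lemma grow_column:
  assumes ab: "1 \<le> a" "a + 1 \<le> int L - 1" "b \<le> int L - 1"
    and e: "En (rect a b) = e" and M: "e + D \<le> M" "e + 2 * D - U1 \<le> M"
  shows "int j \<le> b \<Longrightarrow> reachable_below M (rect a b) (rect a b \<union> vseg (a + 1) 1 (int j)) \<and>
    En (rect a b \<union> vseg (a + 1) 1 (int j)) = e + (if j = 0 then 0 else U2 - \<epsilon> * j)"
proof (induction j)
  case 0
  have "vseg (a + 1) 1 0 = {}"
    by (auto simp: vseg_def)
  then show ?case
    using reachable_below_refl[OF rect_subset_lam] ab e M D_nonneg by auto
next
  case (Suc j)
  let ?S = "rect a b \<union> vseg (a + 1) 1 (int j)"
  have IH: "reachable_below M (rect a b) ?S" "En ?S = e + (if j = 0 then 0 else U2 - \<epsilon> * j)"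
    using Suc by auto
  have S0: "?S \<subseteq> lam0 L"
    using ab Suc.prems by (intro subset_lam0I) auto
  have "En ?S + D \<le> M"
  proof (cases "j = 0")
    case False
    have "\<epsilon> * 1 \<le> \<epsilon> * j"
      using False D_le by (intro mult_left_mono) auto
    then show ?thesis
      using IH M False by auto
  qed (use IH M in simp)
  then have walk: "reachable_below M ?S (insert (a + 1, int j + 1) ?S)"
    using reachable_below_insert_from_right[OF subset_trans[OF S0 lam0_subset_lam]] ab Suc.prems
    by auto
  have "(a + 1, int j + 1) \<in> lam0 L" "(a + 1, int j + 1) \<notin> ?S"
    using ab Suc.prems by (auto simp: mem_lam0)
  from H_conf_of_insert[OF S0 this]
  have "En (insert (a + 1, int j + 1) ?S) = En ?S + D - U1 - U2 * of_bool (j \<noteq> 0)"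
    using ab Suc.prems by (simp add: hnbrs_def vnbrs_def)
  moreover have "insert (a + 1, int j + 1) ?S = rect a b \<union> vseg (a + 1) 1 (int (Suc j))"
    by auto
  ultimately show ?case
    using reachable_below_trans[OF IH(1) walk] IH(2) by (cases "j = 0") (auto simp: algebra_simps)
qed

lemma grow_columns:
  assumes ab: "1 \<le> a" "1 \<le> b" "b \<le> int L - 1" "a + int n \<le> int L - 1"
    and e: "En (rect a b) = rect_energy a b" and M0: "rect_energy a b \<le> M"
    and M: "\<forall>k<n. rect_energy (a + int k) b + D \<le> M \<and> rect_energy (a + int k) b + 2 * D - U1 \<le> M"
  shows "reachable_below M (rect a b) (rect (a + int n) b) \<and> En (rect (a + int n) b) = rect_energy (a + int n) b"
  using ab(4) M
proof (induction n)
  case 0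
  then show ?case
    using reachable_below_refl[OF rect_subset_lam] ab e M0 by auto
next
  case (Suc n)
  have IH: "reachable_below M (rect a b) (rect (a + int n) b)" "En (rect (a + int n) b) = rect_energy (a + int n) b"
    using Suc by auto
  have "reachable_below M (rect (a + int n) b) (rect (a + int n) b \<union> vseg (a + int n + 1) 1 (int (nat b))) \<and>
    En (rect (a + int n) b \<union> vseg (a + int n + 1) 1 (int (nat b))) = rect_energy (a + int n) b + (U2 - \<epsilon> * b)"
    using grow_column[of "a + int n" b "rect_energy (a + int n) b" M "nat b"] ab Suc.prems IH(2) by auto
  moreover have "rect (a + int n) b \<union> vseg (a + int n + 1) 1 (int (nat b)) = rect (a + int (Suc n)) b"
    using ab by auto
  moreover have "rect_energy (a + int n) b + (U2 - \<epsilon> * b) = rect_energy (a + int (Suc n)) b"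
    unfolding rect_energy_def by (simp add: algebra_simps)
  ultimately show ?case
    using reachable_below_trans[OF IH(1)] by auto
qed

lemma add_protuberance:
  assumes ab: "1 \<le> x" "x \<le> a" "a \<le> int L - 1" "1 \<le> b" "b + 1 \<le> int L - 1"
    and e: "En (rect a b) = e" and M: "e + D \<le> M"
  shows "reachable_below M (rect a b) (rect a b \<union> hseg x x (b + 1)) \<and> En (rect a b \<union> hseg x x (b + 1)) = e + D - U2"
proof -
  have S0: "rect a b \<subseteq> lam0 L"
    using ab by (intro rect_subset_lam0) auto
  have "reachable_below M (rect a b) (insert (x, b + 1) (rect a b))"
    using reachable_below_insert_from_top[OF subset_trans[OF S0 lam0_subset_lam]] ab e M by auto
  moreover have "(x, b + 1) \<in> lam0 L" "(x, b + 1) \<notin> rect a b"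
    using ab by (auto simp: mem_lam0)
  from H_conf_of_insert[OF S0 this]
  have "En (insert (x, b + 1) (rect a b)) = e + D - U2"
    using ab e by (simp add: hnbrs_def vnbrs_def)
  moreover have "insert (x, b + 1) (rect a b) = rect a b \<union> hseg x x (b + 1)"
    by auto
  ultimately show ?thesis
    by simp
qed

lemma grow_row_leftwards:
  assumes ab: "1 \<le> b" "b + 1 \<le> int L - 1" "1 \<le> c" "c \<le> d" "d \<le> a" "a \<le> int L - 1"
    and e: "En (rect a b \<union> hseg c d (b + 1)) = e" and M: "e + D \<le> M"
  shows "int k \<le> c - 1 \<Longrightarrow> reachable_below M (rect a b \<union> hseg c d (b + 1)) (rect a b \<union> hseg (c - int k) d (b + 1)) \<and>
     En (rect a b \<union> hseg (c - int k) d (b + 1)) = e - \<epsilon> * k"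
proof (induction k)
  case 0
  have "rect a b \<union> hseg c d (b + 1) \<subseteq> lam0 L"
    using ab by (intro subset_lam0I) auto
  then show ?case
    using reachable_below_refl[OF subset_trans[OF _ lam0_subset_lam]] e M D_nonneg by simp
next
  case (Suc k)
  let ?S = "rect a b \<union> hseg (c - int k) d (b + 1)"
  let ?x = "c - int k - 1"
  have IH: "reachable_below M (rect a b \<union> hseg c d (b + 1)) ?S" "En ?S = e - \<epsilon> * k"
    using Suc by auto
  have S0: "?S \<subseteq> lam0 L"
    using ab Suc.prems by (intro subset_lam0I) auto
  have "0 \<le> \<epsilon> * k"
    using D_le by simp
  then have "En ?S + D \<le> M"
    using IH M by auto
  then have walk: "reachable_below M ?S (insert (?x, b + 1) ?S)"
    using reachable_below_insert_from_top[OF subset_trans[OF S0 lam0_subset_lam]] ab Suc.prems by auto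
  have "(?x, b + 1) \<in> lam0 L" "(?x, b + 1) \<notin> ?S"
    using ab Suc.prems by (auto simp: mem_lam0)
  from H_conf_of_insert[OF S0 this]
  have "En (insert (?x, b + 1) ?S) = En ?S + D - U1 - U2"
    using ab Suc.prems by (simp add: hnbrs_def vnbrs_def)
  moreover have "insert (?x, b + 1) ?S = rect a b \<union> hseg (c - int (Suc k)) d (b + 1)"
    using ab Suc.prems by auto
  ultimately show ?case
    using reachable_below_trans[OF IH(1) walk] IH(2) by (auto simp: algebra_simps)
qed

lemma slide_column_up:
  assumes ab: "1 \<le> i" "i \<le> b" "a \<le> int L - 1" "b + 1 \<le> int L - 1" "i + 1 \<le> a"
    and e: "En (column_hole a b i (b + 1)) = e" and M: "e + U2 \<le> M"
  shows "int n \<le> b + 1 - i \<Longrightarrow> reachable_below M (column_hole a b i (b + 1)) (column_hole a b i (b + 1 - int n)) \<and>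
     En (column_hole a b i (b + 1 - int n)) = e + (if i < b + 1 - int n \<and> b + 1 - int n \<le> b then U2 else 0)"
proof (induction n)
  case 0
  have "column_hole a b i (b + 1) \<subseteq> lam0 L"
    using ab by (intro subset_lam0I) (auto simp: mem_column_hole)
  then show ?case
    using reachable_below_refl[OF subset_trans[OF _ lam0_subset_lam]] e M U2_nonneg by simp
next
  case (Suc n)
  let ?h = "b + 1 - int n"
  have IH: "reachable_below M (column_hole a b i (b + 1)) (column_hole a b i ?h)"
    "En (column_hole a b i ?h) = e + (if i < ?h \<and> ?h \<le> b then U2 else 0)"
    using Suc by auto
  have h: "i + 1 \<le> ?h" "?h \<le> b + 1"
    using Suc.prems by auto
  have S0: "column_hole a b i ?h \<subseteq> lam0 L"
    using ab by (intro subset_lam0I) (auto simp: mem_column_hole)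
  have z: "(a, ?h - 1) \<in> column_hole a b i ?h"
    using h by (auto simp: mem_column_hole)
  have w: "(a, ?h) \<in> lam0 L" "(a, ?h) \<notin> column_hole a b i ?h"
    using h ab by (auto simp: mem_lam0 mem_column_hole)
  have eq: "insert (a, ?h) (column_hole a b i ?h - {(a, ?h - 1)}) = column_hole a b i (b + 1 - int (Suc n))"
    using h by (auto simp: mem_column_hole)
  from H_conf_of_move[OF S0 z w]
  have "En (insert (a, ?h) (column_hole a b i ?h - {(a, ?h - 1)}))
      = En (column_hole a b i ?h) + U2 * of_bool (i \<le> ?h - 2) - U2 * of_bool (?h \<le> b)"
    using h ab by (simp add: mem_column_hole hnbrs_def vnbrs_def)
  then have E: "En (column_hole a b i (b + 1 - int (Suc n)))
      = e + (if i < b + 1 - int (Suc n) \<and> b + 1 - int (Suc n) \<le> b then U2 else 0)"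
    using eq IH(2) h by auto
  have "En (column_hole a b i (b + 1 - int (Suc n))) \<le> M"
    using E M U2_nonneg by auto
  then have "reachable_below M (column_hole a b i (b + 1)) (insert (a, ?h) (column_hole a b i ?h - {(a, ?h - 1)}))"
    using reachable_below_move[OF IH(1) z w(2)] w(1) lam0_subset_lam eq by (auto simp: adj_def)
  then show ?case
    using eq E by simp
qed

lemma slide_row_left:
  assumes ab: "1 \<le> i" "i \<le> b" "a \<le> int L - 1" "b + 1 \<le> int L - 1" "i + 2 \<le> a"
    and e: "En (row_hole a b i (a - i - 1)) = e" and M: "e + U1 \<le> M"
  shows "int n \<le> i + 1 \<Longrightarrow> reachable_below M (row_hole a b i (a - i - 1)) (row_hole a b i (a - i - 1 + int n)) \<and>
     En (row_hole a b i (a - i - 1 + int n))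
       = e + (if 0 < n \<and> int n < i + 1 then U1 else if int n = i + 1 \<and> i = b then - U2 else 0)"
proof (induction n)
  case 0
  have "row_hole a b i (a - i - 1) \<subseteq> lam0 L"
    using ab by (intro subset_lam0I) (auto simp: mem_row_hole)
  then show ?case
    using reachable_below_refl[OF subset_trans[OF _ lam0_subset_lam]] e M U1_nonneg ab by simp
next
  case (Suc n)
  let ?g = "a - i - 1 + int n"
  have IH: "reachable_below M (row_hole a b i (a - i - 1)) (row_hole a b i ?g)"
    "En (row_hole a b i ?g) = e + (if 0 < n \<and> int n < i + 1 then U1 else if int n = i + 1 \<and> i = b then - U2 else 0)"
    using Suc by auto
  have g: "a - i - 1 \<le> ?g" "?g \<le> a - 1"
    using Suc.prems by auto
  have S0: "row_hole a b i ?g \<subseteq> lam0 L"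
    using ab by (intro subset_lam0I) (auto simp: mem_row_hole)
  have z: "(?g + 1, b + 1) \<in> row_hole a b i ?g"
    using g by (auto simp: mem_row_hole)
  have w: "(?g, b + 1) \<in> lam0 L" "(?g, b + 1) \<notin> row_hole a b i ?g"
    using g ab by (auto simp: mem_lam0 mem_row_hole)
  have eq: "insert (?g, b + 1) (row_hole a b i ?g - {(?g + 1, b + 1)}) = row_hole a b i (a - i - 1 + int (Suc n))"
    using g by (auto simp: mem_row_hole)
  from H_conf_of_move[OF S0 z w]
  have "En (insert (?g, b + 1) (row_hole a b i ?g - {(?g + 1, b + 1)}))
      = En (row_hole a b i ?g) + U1 * of_bool (?g + 2 \<le> a)
        + U2 * of_bool (?g + 1 \<le> a - 1 \<or> ?g + 1 = a \<and> i + 1 \<le> b)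
        - U1 * of_bool (a - i - 1 \<le> ?g - 1) - U2"
    using g ab by (simp add: mem_row_hole hnbrs_def vnbrs_def)
  then have E: "En (row_hole a b i (a - i - 1 + int (Suc n)))
      = e + (if 0 < Suc n \<and> int (Suc n) < i + 1 then U1 else if int (Suc n) = i + 1 \<and> i = b then - U2 else 0)"
    using eq IH(2) g ab by auto
  have "En (row_hole a b i (a - i - 1 + int (Suc n))) \<le> M"
    using E M U1_nonneg U2_nonneg by auto
  then have "reachable_below M (row_hole a b i (a - i - 1)) (insert (?g, b + 1) (row_hole a b i ?g - {(?g + 1, b + 1)}))"
    using reachable_below_move[OF IH(1) z w(2)] w(1) lam0_subset_lam eq by (auto simp: adj_def)
  then show ?case
    using eq E by simp
qed

lemma transfer_column_particle:
  assumes ab: "1 \<le> i" "i \<le> b" "a \<le> int L - 1" "b + 1 \<le> int L - 1" "b + 2 \<le> a"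
    and e: "En (column_hole a b i (b + 1)) = e" and M: "e + U1 \<le> M" "e + U2 \<le> M"
  shows "reachable_below M (column_hole a b i (b + 1)) (column_hole a b (i + 1) (b + 1)) \<and>
     En (column_hole a b (i + 1) (b + 1)) = e - (if i = b then U2 else 0)"
proof -
  have "reachable_below M (column_hole a b i (b + 1)) (column_hole a b i (b + 1 - int (nat (b + 1 - i)))) \<and>
     En (column_hole a b i (b + 1 - int (nat (b + 1 - i)))) = e"
    using slide_column_up[OF _ _ _ _ _ e M(2), of "nat (b + 1 - i)"] ab by auto
  then have col: "reachable_below M (column_hole a b i (b + 1)) (row_hole a b i (a - i - 1))"
    "En (row_hole a b i (a - i - 1)) = e"
    using ab column_hole_bottom[of i b a] by auto
  have "reachable_below M (row_hole a b i (a - i - 1)) (row_hole a b i (a - i - 1 + int (nat (i + 1)))) \<and>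
     En (row_hole a b i (a - i - 1 + int (nat (i + 1)))) = e - (if i = b then U2 else 0)"
    using slide_row_left[OF _ _ _ _ _ col(2) M(1), of "nat (i + 1)"] ab by auto
  moreover have "a - i - 1 + int (nat (i + 1)) = a"
    using ab by auto
  ultimately show ?thesis
    using row_hole_right[of a b i] reachable_below_trans[OF col(1)] by auto
qed

lemma transfer_column_particles:
  assumes ab: "1 \<le> b" "a \<le> int L - 1" "b + 1 \<le> int L - 1" "b + 2 \<le> a"
    and e: "En (column_hole a b 1 (b + 1)) = e" and M: "e + U1 \<le> M" "e + U2 \<le> M"
  shows "int k \<le> b \<Longrightarrow> reachable_below M (column_hole a b 1 (b + 1)) (column_hole a b (1 + int k) (b + 1)) \<and>
     En (column_hole a b (1 + int k) (b + 1)) = e - (if int k = b then U2 else 0)"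
proof (induction k)
  case 0
  have "column_hole a b 1 (b + 1) \<subseteq> lam0 L"
    using ab by (intro subset_lam0I) (auto simp: mem_column_hole)
  then show ?case
    using reachable_below_refl[OF subset_trans[OF _ lam0_subset_lam]] e M U1_nonneg ab by simp
next
  case (Suc k)
  have IH: "reachable_below M (column_hole a b 1 (b + 1)) (column_hole a b (1 + int k) (b + 1))"
    "En (column_hole a b (1 + int k) (b + 1)) = e"
    using Suc by auto
  have "reachable_below M (column_hole a b (1 + int k) (b + 1)) (column_hole a b (1 + int k + 1) (b + 1)) \<and>
     En (column_hole a b (1 + int k + 1) (b + 1)) = e - (if 1 + int k = b then U2 else 0)"
    using transfer_column_particle[OF _ _ _ _ _ IH(2)] ab Suc.prems M by auto
  then show ?case
    using reachable_below_trans[OF IH(1)] by (auto simp: add.commute add.left_commute)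
qed

lemma column_onto_row:
  assumes ab: "1 \<le> b" "a \<le> int L - 1" "b + 1 \<le> int L - 1" "b + 2 \<le> a"
    and e: "En (rect a b \<union> hseg (a - 1) (a - 1) (b + 1)) = e" and M: "e + U1 \<le> M" "e + U2 \<le> M"
  shows "reachable_below M (rect a b \<union> hseg (a - 1) (a - 1) (b + 1)) (rect (a - 1) b \<union> hseg (a - b - 1) (a - 1) (b + 1)) \<and>
     En (rect (a - 1) b \<union> hseg (a - b - 1) (a - 1) (b + 1)) = e - U2"
proof -
  have "column_hole a b 1 (b + 1) = rect a b \<union> hseg (a - 1) (a - 1) (b + 1)"
    "column_hole a b (1 + int (nat b)) (b + 1) = rect (a - 1) b \<union> hseg (a - b - 1) (a - 1) (b + 1)"
    using ab by (auto simp: column_hole_def)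
  then show ?thesis
    using transfer_column_particles[OF ab _ M, of "nat b"] e ab by auto
qed

text \<open>The barrier \<open>rect_energy (2 * b + 1) b + 2 * U1 - \<epsilon>\<close> is met while a particle of the carried column
  slides along the new row: the rectangle plus the protuberance (\<open>\<Delta> - U2\<close>) plus one broken horizontal
  bond (\<open>U1\<close>).\<close>

lemma add_row_to_quasi_square:
  assumes U12: "2 * U2 \<le> U1" and b: "1 \<le> b" "2 * b + 1 \<le> int L - 1"
    and e: "En (rect (2 * b + 1) b) = rect_energy (2 * b + 1) b"
    and M: "rect_energy (2 * b + 1) b + 2 * U1 - \<epsilon> \<le> M"
  shows "reachable_below M (rect (2 * b + 1) b) (rect (2 * b) (b + 1)) \<and>
    En (rect (2 * b) (b + 1)) = rect_energy (2 * b) (b + 1)"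
proof -
  let ?E = "rect_energy (2 * b + 1) b"
  have "?E + D \<le> M"
    using M U12 U2_nonneg by linarith
  then have protuberance:
    "reachable_below M (rect (2 * b + 1) b) (rect (2 * b + 1) b \<union> hseg (2 * b) (2 * b) (b + 1))"
    "En (rect (2 * b + 1) b \<union> hseg (2 * b) (2 * b) (b + 1)) = ?E + D - U2"
    using add_protuberance[where x = "2 * b", OF _ _ _ _ _ e] b by simp_all
  have "reachable_below M (rect (2 * b + 1) b \<union> hseg (2 * b + 1 - 1) (2 * b + 1 - 1) (b + 1))
      (rect (2 * b + 1 - 1) b \<union> hseg (2 * b + 1 - b - 1) (2 * b + 1 - 1) (b + 1)) \<and>
     En (rect (2 * b + 1 - 1) b \<union> hseg (2 * b + 1 - b - 1) (2 * b + 1 - 1) (b + 1)) = ?E + D - U2 - U2"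
    using column_onto_row[of b "2 * b + 1" "?E + D - U2" M] b protuberance(2) M U1_nonneg U2_nonneg U12
    by auto
  then have row:
    "reachable_below M (rect (2 * b + 1) b \<union> hseg (2 * b) (2 * b) (b + 1)) (rect (2 * b) b \<union> hseg b (2 * b) (b + 1))"
    "En (rect (2 * b) b \<union> hseg b (2 * b) (b + 1)) = ?E + D - 2 * U2"
    by (auto simp: algebra_simps)
  have "?E + D - 2 * U2 + D \<le> M"
    using M D_le by linarith
  then have "reachable_below M (rect (2 * b) b \<union> hseg b (2 * b) (b + 1))
      (rect (2 * b) b \<union> hseg (b - int (nat (b - 1))) (2 * b) (b + 1)) \<and>
    En (rect (2 * b) b \<union> hseg (b - int (nat (b - 1))) (2 * b) (b + 1)) = ?E + D - 2 * U2 - \<epsilon> * (nat (b - 1))"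
    using grow_row_leftwards[OF _ _ _ _ _ _ row(2), of M "nat (b - 1)"] b by simp
  moreover have "rect (2 * b) b \<union> hseg (b - int (nat (b - 1))) (2 * b) (b + 1) = rect (2 * b) (b + 1)"
    using b by auto
  moreover have "?E + D - 2 * U2 - \<epsilon> * (nat (b - 1)) = rect_energy (2 * b) (b + 1)"
    using b unfolding rect_energy_def by (simp add: algebra_simps)
  ultimately show ?thesis
    using reachable_below_trans[OF reachable_below_trans[OF protuberance(1) row(1)]] by auto
qed

lemma grow_quasi_square:
  assumes U12: "2 * U2 \<le> U1"
    and b: "1 \<le> b" "2 * b + 1 \<le> int L - 1" and small: "\<epsilon> * b \<le> U2"
    and a0: "1 \<le> a0" "a0 \<le> 2 * b"
    and e: "En (rect a0 b) = rect_energy a0 b"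
    and M: "rect_energy (2 * b + 1) b + 2 * U1 - \<epsilon> \<le> M"
  shows "reachable_below M (rect a0 b) (rect (2 * b) (b + 1)) \<and>
    En (rect (2 * b) (b + 1)) = rect_energy (2 * b) (b + 1)"
proof -
  let ?n = "nat (2 * b + 1 - a0)"
  have "rect_energy (2 * b + 1) b - rect_energy (2 * b) b = U2 - \<epsilon> * b"
    using rect_energy_diff_width[of "2 * b + 1" b "2 * b"] by simp
  then have widest: "rect_energy (2 * b) b + D \<le> M" "rect_energy (2 * b) b + 2 * D - U1 \<le> M"
    using M U12 small D_le U2_nonneg by linarith+
  have below: "rect_energy x b \<le> rect_energy (2 * b) b" if "x \<le> 2 * b" for x
    using rect_energy_mono_width[OF that small] .
  have "reachable_below M (rect a0 b) (rect (a0 + int ?n) b) \<and> En (rect (a0 + int ?n) b) = rect_energy (a0 + int ?n) b"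
  proof (rule grow_columns[OF _ _ _ _ e])
    show "1 \<le> a0" "1 \<le> b" "b \<le> int L - 1" "a0 + int ?n \<le> int L - 1"
      using a0 b by auto
    show "rect_energy a0 b \<le> M"
      using below[of a0] a0 widest(1) D_nonneg by auto
    show "\<forall>k<?n. rect_energy (a0 + int k) b + D \<le> M \<and> rect_energy (a0 + int k) b + 2 * D - U1 \<le> M"
    proof (intro allI impI)
      fix k
      assume "k < ?n"
      then have "rect_energy (a0 + int k) b \<le> rect_energy (2 * b) b"
        by (intro below) auto
      then show "rect_energy (a0 + int k) b + D \<le> M \<and> rect_energy (a0 + int k) b + 2 * D - U1 \<le> M"
        using widest by auto
    qed
  qed
  moreover have "a0 + int ?n = 2 * b + 1"
    using a0 by auto
  ultimately show ?thesis
    using add_row_to_quasi_square[OF U12 b _ M] reachable_below_trans by auto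
qed

lemma grow_from_empty:
  assumes U12: "2 * U2 \<le> U1" and "1 \<le> b" "2 * b + 1 \<le> int L - 1" "\<epsilon> * b \<le> U2"
    and "\<forall>b'. 1 \<le> b' \<and> b' \<le> b \<longrightarrow> rect_energy (2 * b' + 1) b' + 2 * U1 - \<epsilon> \<le> M"
    and "D \<le> M"
  shows "reachable_below M {} (rect (2 * b) (b + 1)) \<and> En (rect (2 * b) (b + 1)) = rect_energy (2 * b) (b + 1)"
  using assms(2-5)
proof (induction b rule: int_ge_induct)
  case base
  have single: "rect 1 1 = {(1, 1)}"
    by auto
  have "reachable_below M {} (rect 1 1)"
    using reachable_below_insert_from_top[of "{}" M 1 1] base H_empty assms(6) single by auto
  moreover have "En (rect 1 1) = rect_energy 1 1"
    using H_conf_of_insert[of "{}" L "(1, 1)" U1 U2 D] base H_empty single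
    by (simp add: mem_lam0 hnbrs_def vnbrs_def rect_energy_def)
  ultimately show ?case
    using grow_quasi_square[OF U12, of 1 1 M] base reachable_below_trans by auto
next
  case (step b)
  have "\<epsilon> * b \<le> \<epsilon> * (b + 1)"
    using D_le by (simp add: mult_left_mono)
  then have IH: "reachable_below M {} (rect (2 * b) (b + 1))" "En (rect (2 * b) (b + 1)) = rect_energy (2 * b) (b + 1)"
    using step by auto
  have "reachable_below M (rect (2 * b) (b + 1)) (rect (2 * (b + 1)) (b + 1 + 1)) \<and>
    En (rect (2 * (b + 1)) (b + 1 + 1)) = rect_energy (2 * (b + 1)) (b + 1 + 1)"
  proof (rule grow_quasi_square[OF U12 _ _ _ _ _ IH(2)])
    show "1 \<le> b + 1" "2 * (b + 1) + 1 \<le> int L - 1" "\<epsilon> * (b + 1) \<le> U2" "1 \<le> 2 * b" "2 * b \<le> 2 * (b + 1)"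
      using step by auto
    show "rect_energy (2 * (b + 1) + 1) (b + 1) + 2 * U1 - \<epsilon> \<le> M"
      using spec[OF step.prems(3), of "b + 1"] step.hyps(1) by simp
  qed
  then show ?case
    using reachable_below_trans[OF IH(1)] by auto
qed

lemma grow_rows:
  assumes W: "1 \<le> b0" "b0 + int n \<le> int L - 1" "1 \<le> int L - 1" and DU: "U2 \<le> D"
    and e: "En (rect (int L - 1) b0) = rect_energy (int L - 1) b0"
    and M0: "rect_energy (int L - 1) b0 \<le> M"
    and M: "\<forall>b. b0 \<le> b \<and> b < b0 + int n \<longrightarrow> rect_energy (int L - 1) b + 2 * D - U2 \<le> M"
  shows "reachable_below M (rect (int L - 1) b0) (rect (int L - 1) (b0 + int n)) \<and>
     En (rect (int L - 1) (b0 + int n)) = rect_energy (int L - 1) (b0 + int n)"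
  using W(2) M
proof (induction n)
  case 0
  then show ?case
    using reachable_below_refl[OF rect_subset_lam] W e M0 by auto
next
  case (Suc n)
  let ?W = "int L - 1"
  let ?b = "b0 + int n"
  have IH: "reachable_below M (rect ?W b0) (rect ?W ?b)" "En (rect ?W ?b) = rect_energy ?W ?b"
    using Suc by auto
  have Mb: "rect_energy ?W ?b + 2 * D - U2 \<le> M"
    using Suc.prems(2) by auto
  then have "rect_energy ?W ?b + D \<le> M"
    using DU by linarith
  have "reachable_below M (rect ?W ?b) (rect ?W ?b \<union> hseg ?W ?W (?b + 1)) \<and>
      En (rect ?W ?b \<union> hseg ?W ?W (?b + 1)) = rect_energy ?W ?b + D - U2"
    using add_protuberance[where x = "int L - 1", OF _ _ _ _ _ IH(2)] W Suc.prems \<open>rect_energy ?W ?b + D \<le> M\<close>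
    by simp
  then have protuberance: "reachable_below M (rect ?W ?b) (rect ?W ?b \<union> hseg ?W ?W (?b + 1))"
    "En (rect ?W ?b \<union> hseg ?W ?W (?b + 1)) = rect_energy ?W ?b + D - U2"
    by auto
  have "reachable_below M (rect ?W ?b \<union> hseg ?W ?W (?b + 1)) (rect ?W ?b \<union> hseg (?W - int (nat (?W - 1))) ?W (?b + 1)) \<and>
     En (rect ?W ?b \<union> hseg (?W - int (nat (?W - 1))) ?W (?b + 1)) = rect_energy ?W ?b + D - U2 - \<epsilon> * (nat (?W - 1))"
    using grow_row_leftwards[OF _ _ _ _ _ _ protuberance(2), of M "nat (?W - 1)"] W Suc.prems Mb
    by (auto simp: algebra_simps)
  moreover have "rect ?W ?b \<union> hseg (?W - int (nat (?W - 1))) ?W (?b + 1) = rect ?W (b0 + int (Suc n))"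
    using W by auto
  moreover have "rect_energy ?W ?b + D - U2 - \<epsilon> * (nat (?W - 1)) = rect_energy ?W (b0 + int (Suc n))"
    using W unfolding rect_energy_def by (simp add: algebra_simps)
  ultimately show ?case
    using reachable_below_trans[OF reachable_below_trans[OF IH(1) protuberance(1)]] by auto
qed

lemma Phi_le_of_reachable_below:
  assumes "reachable_below M {} (lam0 L)"
  shows "Phi U1 U2 D L zero_conf (one_conf L) \<le> M"
proof -
  have conf_ends: "conf_of {} = zero_conf" "conf_of (lam0 L) = one_conf L"
    unfolding conf_of_def zero_conf_def one_conf_def by auto
  obtain p where p: "is_path L zero_conf (one_conf L) p" "\<forall>c\<in>set p. H U1 U2 D L c \<le> M"
    using assms unfolding reachable_below_def conf_ends by blast
  have "H U1 U2 D L zero_conf \<le> Max (H U1 U2 D L ` set q)" if "is_path L zero_conf (one_conf L) q" for q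
  proof -
    have "zero_conf \<in> set q"
      using that unfolding is_path_iff by (metis hd_in_set)
    then show ?thesis
      by (intro Max_ge) auto
  qed
  then have "bdd_below ((\<lambda>q. Max (H U1 U2 D L ` set q)) ` {q. is_path L zero_conf (one_conf L) q})"
    by (intro bdd_belowI[of _ "H U1 U2 D L zero_conf"]) auto
  then have "Phi U1 U2 D L zero_conf (one_conf L) \<le> Max (H U1 U2 D L ` set p)"
    unfolding Phi_def by (rule cINF_lower) (use p(1) in simp)
  also have "\<dots> \<le> M"
    using p unfolding is_path_iff by (subst Max_le_iff) auto
  finally show ?thesis .
qed

end

section \<open>The reference path\<close>

lemma ceiling_ratio_bounds:
  fixes e u :: real
  assumes "0 < e" "e < u" "u / e \<notin> \<nat>"
  shows "2 \<le> \<lceil>u / e\<rceil>" and "e * (\<lceil>u / e\<rceil> - 1) < u" and "u < e * \<lceil>u / e\<rceil>"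
proof -
  have "1 < u / e"
    using assms(1,2) by simp
  moreover have "u / e \<noteq> of_int \<lceil>u / e\<rceil>"
  proof
    assume eq: "u / e = of_int \<lceil>u / e\<rceil>"
    then have "0 \<le> \<lceil>u / e\<rceil>"
      using \<open>1 < u / e\<close> by linarith
    then have "u / e = of_nat (nat \<lceil>u / e\<rceil>)"
      using eq by simp
    then show False
      using assms(3) of_nat_in_Nats by metis
  qed
  ultimately have "u / e < \<lceil>u / e\<rceil>" "\<lceil>u / e\<rceil> - 1 < u / e"
    using le_of_int_ceiling[of "u / e"] ceiling_correct[of "u / e"] by linarith+
  then show "2 \<le> \<lceil>u / e\<rceil>" "e * (\<lceil>u / e\<rceil> - 1) < u" "u < e * \<lceil>u / e\<rceil>"
    using \<open>1 < u / e\<close> assms(1) by (auto simp: field_simps)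
qed

locale kawasaki_small_eps = kawasaki_growth +
  assumes eps_pos: "0 < \<epsilon>" and eps_lt_U2: "\<epsilon> < U2" and eps_lt_U1: "\<epsilon> < U1 - 2 * U2"
    and ratio_not_Nats: "U2 / \<epsilon> \<notin> \<nat>"
begin

abbreviation crit_height :: int where
  "crit_height \<equiv> \<lceil>U2 / \<epsilon>\<rceil>"

lemma crit_height_bounds:
  "2 \<le> crit_height" "\<epsilon> * (crit_height - 1) < U2" "U2 < \<epsilon> * crit_height"
  using ceiling_ratio_bounds[OF eps_pos eps_lt_U2 ratio_not_Nats] by auto

text \<open>With \<open>\<ell> = crit_height\<close>, \<open>\<Gamma>\<close> is the energy of the saddle met while a \<open>(2\<ell> - 3) \<times> \<ell>\<close> rectangle
  grows a column: the rectangle, a protuberance at its side and a free particle.\<close>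

lemma Gamma_eq_saddle: "Gamma U1 U2 D = rect_energy (2 * crit_height - 3) crit_height + 2 * D - U1"
  unfolding Gamma_def ell2_def eps_def rect_energy_def Let_def power2_eq_square
  by (simp add: algebra_simps)

lemma level_barrier_le_Gamma:
  assumes "1 \<le> b" "b \<le> crit_height - 1"
  shows "rect_energy (2 * b + 1) b + 2 * U1 - \<epsilon> \<le> Gamma U1 U2 D"
proof -
  let ?l = "real_of_int crit_height"
  have "\<epsilon> * (2 * ?l + 2 * b - 1) \<le> \<epsilon> * (4 * ?l - 3)"
    using assms eps_pos by (intro mult_left_mono) auto
  also have "\<dots> = 4 * (\<epsilon> * (?l - 1)) + \<epsilon>"
    by (simp add: algebra_simps)
  also have "\<dots> \<le> U1 + 2 * U2"
    using crit_height_bounds(2) eps_lt_U1 by simp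
  finally have "0 \<le> (?l - 1 - b) * (U1 + 2 * U2 - \<epsilon> * (2 * ?l + 2 * b - 1))"
    using assms by (intro mult_nonneg_nonneg) auto
  also have "\<dots> = Gamma U1 U2 D - (rect_energy (2 * b + 1) b + 2 * U1 - \<epsilon>)"
    unfolding Gamma_eq_saddle rect_energy_def by (simp add: algebra_simps)
  finally show ?thesis
    by simp
qed

lemma reach_critical_rect:
  assumes "2 * crit_height \<le> int L"
  shows "reachable_below (Gamma U1 U2 D) {} (rect (2 * crit_height - 2) crit_height) \<and>
    En (rect (2 * crit_height - 2) crit_height) = rect_energy (2 * crit_height - 2) crit_height"
proof -
  have "rect_energy (2 * 1 + 1) 1 + 2 * U1 - \<epsilon> \<le> Gamma U1 U2 D"
    using level_barrier_le_Gamma[of 1] crit_height_bounds(1) by simp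
  moreover have "D \<le> rect_energy (2 * 1 + 1) 1 + 2 * U1 - \<epsilon>"
    unfolding rect_energy_def using eps_lt_U1 eps_lt_U2 U1_nonneg U2_nonneg by simp
  ultimately have "D \<le> Gamma U1 U2 D"
    by linarith
  moreover have "\<epsilon> * (crit_height - 1) \<le> U2"
    using crit_height_bounds(2) by simp
  ultimately have "reachable_below (Gamma U1 U2 D) {} (rect (2 * (crit_height - 1)) (crit_height - 1 + 1)) \<and>
    En (rect (2 * (crit_height - 1)) (crit_height - 1 + 1)) = rect_energy (2 * (crit_height - 1)) (crit_height - 1 + 1)"
    using grow_from_empty[of "crit_height - 1"] level_barrier_le_Gamma eps_lt_U1 eps_pos crit_height_bounds(1) assms
    by auto
  then show ?thesis
    by (simp add: algebra_simps)
qed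

lemma reach_full_width:
  assumes "2 * crit_height \<le> int L"
  shows "reachable_below (Gamma U1 U2 D) (rect (2 * crit_height - 2) crit_height) (rect (int L - 1) crit_height) \<and>
    En (rect (int L - 1) crit_height) = rect_energy (int L - 1) crit_height"
proof -
  let ?a0 = "2 * crit_height - 2" and ?n = "nat (int L - 1 - (2 * crit_height - 2))"
  have below: "rect_energy x crit_height + 2 * D - U1 \<le> Gamma U1 U2 D" if "2 * crit_height - 3 \<le> x" for x
    using rect_energy_antimono_width[OF that] crit_height_bounds(3) Gamma_eq_saddle by simp
  have "D \<le> 2 * D - U1"
    using eps_lt_U2 by simp
  have "reachable_below (Gamma U1 U2 D) (rect ?a0 crit_height) (rect (?a0 + int ?n) crit_height) \<and>
    En (rect (?a0 + int ?n) crit_height) = rect_energy (?a0 + int ?n) crit_height"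
  proof (rule grow_columns)
    show "1 \<le> ?a0" "1 \<le> crit_height" "crit_height \<le> int L - 1"
      using crit_height_bounds(1) assms by linarith+
    show "?a0 + int ?n \<le> int L - 1"
      using assms by (simp add: algebra_simps)
    show "En (rect ?a0 crit_height) = rect_energy ?a0 crit_height"
      using reach_critical_rect[OF assms] by simp
    show "rect_energy ?a0 crit_height \<le> Gamma U1 U2 D"
      using below[of ?a0] \<open>D \<le> 2 * D - U1\<close> D_nonneg by simp
    show "\<forall>k<?n. rect_energy (?a0 + int k) crit_height + D \<le> Gamma U1 U2 D \<and>
        rect_energy (?a0 + int k) crit_height + 2 * D - U1 \<le> Gamma U1 U2 D"
    proof (intro allI impI)
      fix k
      have "rect_energy (?a0 + int k) crit_height + 2 * D - U1 \<le> Gamma U1 U2 D"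
        by (rule below) simp
      then show "rect_energy (?a0 + int k) crit_height + D \<le> Gamma U1 U2 D \<and>
          rect_energy (?a0 + int k) crit_height + 2 * D - U1 \<le> Gamma U1 U2 D"
        using \<open>D \<le> 2 * D - U1\<close> by simp
    qed
  qed
  moreover have "?a0 + int ?n = int L - 1"
    using assms by (simp add: algebra_simps)
  ultimately show ?thesis
    by simp
qed

lemma reach_lam0_from_full_width:
  assumes "crit_height \<le> int L - 1" and "U1 < \<epsilon> * (int L - 1)"
    and "rect_energy (int L - 1) crit_height + 2 * D - U2 \<le> Gamma U1 U2 D"
    and "En (rect (int L - 1) crit_height) = rect_energy (int L - 1) crit_height"
  shows "reachable_below (Gamma U1 U2 D) (rect (int L - 1) crit_height) (lam0 L)"
proof -
  let ?W = "int L - 1" and ?n = "nat (int L - 1 - crit_height)"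
  have "U2 \<le> D"
    using eps_lt_U1 U2_nonneg by simp
  have below: "rect_energy ?W b \<le> rect_energy ?W crit_height" if "crit_height \<le> b" for b
  proof -
    have "(real_of_int b - crit_height) * (U1 - \<epsilon> * ?W) \<le> 0"
      using that assms(2) by (intro mult_nonneg_nonpos) auto
    then show ?thesis
      using rect_energy_diff_height[of ?W b crit_height] by simp
  qed
  have "reachable_below (Gamma U1 U2 D) (rect ?W crit_height) (rect ?W (crit_height + int ?n)) \<and>
    En (rect ?W (crit_height + int ?n)) = rect_energy ?W (crit_height + int ?n)"
  proof (rule grow_rows)
    show "1 \<le> crit_height" "1 \<le> ?W"
      using crit_height_bounds(1) assms(1) by linarith+
    show "crit_height + int ?n \<le> ?W"
      using assms(1) by simp
    show "rect_energy ?W crit_height \<le> Gamma U1 U2 D"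
      using assms(3) \<open>U2 \<le> D\<close> D_nonneg by simp
    show "\<forall>b. crit_height \<le> b \<and> b < crit_height + int ?n \<longrightarrow> rect_energy ?W b + 2 * D - U2 \<le> Gamma U1 U2 D"
      using below assms(3) by fastforce
  qed (use assms(4) \<open>U2 \<le> D\<close> in auto)
  moreover have "crit_height + int ?n = ?W"
    using assms(1) by simp
  ultimately show ?thesis
    using rect_eq_lam0 by simp
qed

text \<open>The last bound says that a full-width rectangle of height \<open>\<ell>\<close> with a protuberance and a free
  particle stays below \<open>\<Gamma>\<close>; it holds for large \<open>L\<close> because \<open>\<epsilon> \<ell> > U2\<close>.\<close>

lemma reachable_below_Gamma_lam0:
  assumes "2 * crit_height + 1 < real L - 1" and "U1 / \<epsilon> < real L - 1"
    and "(U1 * crit_height + 2 * D - U2 - Gamma U1 U2 D) / (\<epsilon> * crit_height - U2) < real L - 1"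
  shows "reachable_below (Gamma U1 U2 D) {} (lam0 L)"
proof -
  have width: "2 * crit_height \<le> int L"
    using assms(1) by linarith
  have "U1 < \<epsilon> * (int L - 1)"
    using assms(2) eps_pos by (simp add: divide_less_eq mult.commute)
  moreover have "rect_energy (int L - 1) crit_height + 2 * D - U2 \<le> Gamma U1 U2 D"
  proof -
    have "0 < \<epsilon> * crit_height - U2"
      using crit_height_bounds(3) by simp
    then have "U1 * crit_height + 2 * D - U2 - Gamma U1 U2 D \<le> (int L - 1) * (\<epsilon> * crit_height - U2)"
      using assms(3) by (simp add: divide_less_eq less_imp_le)
    then show ?thesis
      unfolding rect_energy_def by (simp add: algebra_simps)
  qed
  ultimately have "reachable_below (Gamma U1 U2 D) (rect (int L - 1) crit_height) (lam0 L)"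
    using reach_lam0_from_full_width conjunct2[OF reach_full_width[OF width]] width crit_height_bounds(1)
    by simp
  then show ?thesis
    using reach_critical_rect[OF width] reach_full_width[OF width] reachable_below_trans by blast
qed

end

lemma eventually_Phi_le_Gamma:
  assumes "0 < eps U1 U2 \<Delta>" "eps U1 U2 \<Delta> < U2" "eps U1 U2 \<Delta> < U1 - 2 * U2" "U2 / eps U1 U2 \<Delta> \<notin> \<nat>"
  shows "\<forall>\<^sub>F L in sequentially. Phi U1 U2 \<Delta> L zero_conf (one_conf L) \<le> Gamma U1 U2 \<Delta>"
proof -
  let ?e = "eps U1 U2 \<Delta>"
  let ?l = "\<lceil>U2 / ?e\<rceil>"
  have large: "\<forall>\<^sub>F L in sequentially. c < real L - 1" for c
    using filterlim_real_sequentially unfolding filterlim_at_top_dense by (simp add: less_diff_eq)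
  have "\<forall>\<^sub>F L in sequentially. 2 * ?l + 1 < real L - 1 \<and> U1 / ?e < real L - 1 \<and>
      (U1 * ?l + 2 * \<Delta> - U2 - Gamma U1 U2 \<Delta>) / (?e * ?l - U2) < real L - 1"
    by (intro eventually_conj large)
  then show ?thesis
  proof (rule eventually_mono)
    fix L :: nat
    assume large: "2 * ?l + 1 < real L - 1 \<and> U1 / ?e < real L - 1 \<and>
      (U1 * ?l + 2 * \<Delta> - U2 - Gamma U1 U2 \<Delta>) / (?e * ?l - U2) < real L - 1"
    interpret kawasaki_small_eps U1 U2 \<Delta> L
      using assms by unfold_locales (auto simp: eps_def)
    have "reachable_below (Gamma U1 U2 \<Delta>) {} (lam0 L)"
      using large by (intro reachable_below_Gamma_lam0) (simp_all add: eps_def)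
    then show "Phi U1 U2 \<Delta> L zero_conf (one_conf L) \<le> Gamma U1 U2 \<Delta>"
      by (rule Phi_le_of_reachable_below)
  qed
qed

theorem corollary3p2:
  fixes U1 U2 :: real
  assumes "U2 > 0" and "U1 > 2 * U2"
  shows "\<exists>\<epsilon>0 > 0. \<forall>\<Delta>::real. \<Delta> > 0 \<and> 0 < eps U1 U2 \<Delta> \<and> eps U1 U2 \<Delta> < \<epsilon>0
            \<and> U2 / eps U1 U2 \<Delta> \<notin> \<nat> \<longrightarrow>
          (\<exists>L0::nat. \<forall>L\<ge>L0. Phi U1 U2 \<Delta> L zero_conf (one_conf L) \<le> Gamma U1 U2 \<Delta>)"
proof (intro exI[of _ "min U2 (U1 - 2 * U2)"] conjI allI impI)
  show "0 < min U2 (U1 - 2 * U2)"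
    using assms by simp
  fix \<Delta> :: real
  assume "\<Delta> > 0 \<and> 0 < eps U1 U2 \<Delta> \<and> eps U1 U2 \<Delta> < min U2 (U1 - 2 * U2) \<and> U2 / eps U1 U2 \<Delta> \<notin> \<nat>"
  then have "\<forall>\<^sub>F L in sequentially. Phi U1 U2 \<Delta> L zero_conf (one_conf L) \<le> Gamma U1 U2 \<Delta>"
    by (intro eventually_Phi_le_Gamma) auto
  then show "\<exists>L0. \<forall>L\<ge>L0. Phi U1 U2 \<Delta> L zero_conf (one_conf L) \<le> Gamma U1 U2 \<Delta>"
    unfolding eventually_sequentially .
qed

end
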